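(* Let $R$ be a differential field of characteristic zero, let $\ell_0,r_0\in R$, and define $\ell_{j+1}=\ell_j'+r_j+\ell_0\ell_j$, $r_{j+1}=r_j'+r_0\ell_j$ for $j\ge0$. Suppose there is $p>0$ with $\ell_p\neq0$, $\ell_{p-1}\neq0$ and $$\frac{r_p}{\ell_p}=\frac{r_{p-1}}{\ell_{p-1}}=:\alpha .$$ Let $K$ be a differential field extension of $R$ containing nonzero elements $u,v$ with $u'=\alpha u$, $v'=\ell_0v$, and an element $\beta$ with $\beta'=u^2v$. Then every solution $y\in K$ of $y''=\ell_0y'+r_0y$ is of the form $y=u^{-1}(c_2+c_1\beta)$ for some constants $c_1,c_2$ of $K$.
   Context: Successive differentiation of $y''=\ell_0y'+r_0y$ gives $y^{(j+2)}=\ell_jy'+r_jy$ with $\ell_j,r_j$ defined by the stated recurrence. *)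

theory Defs
  imports Main
begin

text \<open>A derivation on a field: additive and satisfying the Leibniz rule.
  A differential field K is a field type equipped with such a map D.\<close>
definition derivation :: "('a::field \<Rightarrow> 'a) \<Rightarrow> bool" where
  "derivation D \<longleftrightarrow> (\<forall>x y. D (x + y) = D x + D y) \<and> (\<forall>x y. D (x * y) = D x * y + x * D y)"

definition differential_subfield :: "('a::field \<Rightarrow> 'a) \<Rightarrow> 'a set \<Rightarrow> bool" where
  "differential_subfield D R \<longleftrightarrow>
     0 \<in> R \<and> 1 \<in> R \<and>
     (\<forall>x\<in>R. \<forall>y\<in>R. x + y \<in> R \<and> x * y \<in> R) \<and>
     (\<forall>x\<in>R. - x \<in> R \<and> inverse x \<in> R \<and> D x \<in> R)"

fun lr_seq :: "('a::field \<Rightarrow> 'a) \<Rightarrow> 'a \<Rightarrow> 'a \<Rightarrow> nat \<Rightarrow> 'a \<times> 'a" where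
  "lr_seq D l0 r0 0 = (l0, r0)"
| "lr_seq D l0 r0 (Suc j) =
     (let (l, r) = lr_seq D l0 r0 j in (D l + r + l0 * l, D r + r0 * l))"

definition ell :: "('a::field \<Rightarrow> 'a) \<Rightarrow> 'a \<Rightarrow> 'a \<Rightarrow> nat \<Rightarrow> 'a" where
  "ell D l0 r0 j = fst (lr_seq D l0 r0 j)"

definition arr :: "('a::field \<Rightarrow> 'a) \<Rightarrow> 'a \<Rightarrow> 'a \<Rightarrow> nat \<Rightarrow> 'a" where
  "arr D l0 r0 j = snd (lr_seq D l0 r0 j)"

end

theory Submission
  imports Defs
begin

text \<open>Differentiating \<open>y'' = l\<^sub>0 y' + r\<^sub>0 y\<close> repeatedly gives
  \<open>y\<^bsup>(j+2)\<^esup> = l\<^sub>j y' + r\<^sub>j y\<close>. With \<open>p = q + 1\<close> the hypothesis says \<open>r\<^sub>q = \<alpha> l\<^sub>q\<close> and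
  \<open>r\<^sub>p = \<alpha> l\<^sub>p\<close>, so for \<open>w = y' + \<alpha> y\<close> we get \<open>y\<^bsup>(q+2)\<^esup> = l\<^sub>q w\<close> and \<open>y\<^bsup>(q+3)\<^esup> = l\<^sub>p w\<close>.
  Comparing the derivative of the first identity with the second yields
  \<open>w' = (\<alpha> + l\<^sub>0) w\<close>, the equation also satisfied by \<open>u v\<close>; hence \<open>c\<^sub>1 = w / (u v)\<close>
  is a constant. Then \<open>(u y)' = u w = c\<^sub>1 \<beta>'\<close>, so \<open>c\<^sub>2 = u y - c\<^sub>1 \<beta>\<close> is a constant too.
  Neither the subfield \<open>R\<close> nor the characteristic plays a role.\<close>

lemma derivation_add: "derivation D \<Longrightarrow> D (a + b) = D a + D b"
  by (simp add: derivation_def)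

lemma derivation_mult: "derivation D \<Longrightarrow> D (a * b) = D a * b + a * D b"
  by (simp add: derivation_def)

lemma derivation_diff:
  assumes "derivation D" shows "D (a - b) = D a - D b"
  using derivation_add[OF assms, of "a - b" b] by simp

lemma derivation_quotient_eq_0:
  assumes D: "derivation D" and "D w = c * w" and "D z = c * z" and "z \<noteq> 0"
  shows "D (w / z) = 0"
proof -
  have "D w = D (w / z * z)" using \<open>z \<noteq> 0\<close> by simp
  also have "\<dots> = D (w / z) * z + w / z * (c * z)"
    by (simp only: derivation_mult[OF D] \<open>D z = c * z\<close>)
  also have "\<dots> = D (w / z) * z + c * w"
    using \<open>z \<noteq> 0\<close> by simp
  finally have "D (w / z) * z = 0" using \<open>D w = c * w\<close> by simp
  then show ?thesis using \<open>z \<noteq> 0\<close> by simp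
qed

lemma ell_Suc: "ell D l0 r0 (Suc j) = D (ell D l0 r0 j) + arr D l0 r0 j + l0 * ell D l0 r0 j"
  by (simp add: ell_def arr_def split: prod.splits)

lemma arr_Suc: "arr D l0 r0 (Suc j) = D (arr D l0 r0 j) + r0 * ell D l0 r0 j"
  by (simp add: ell_def arr_def split: prod.splits)

lemma higher_derivative_solution:
  assumes D: "derivation D" and y: "D (D y) = l0 * D y + r0 * y"
  shows "(D ^^ Suc (Suc j)) y = ell D l0 r0 j * D y + arr D l0 r0 j * y"
proof (induction j)
  case 0
  then show ?case using y by (simp add: ell_def arr_def)
next
  case (Suc j)
  have "(D ^^ Suc (Suc (Suc j))) y = D (ell D l0 r0 j * D y + arr D l0 r0 j * y)"
    using Suc by simp
  also have "\<dots> = D (ell D l0 r0 j) * D y + ell D l0 r0 j * (l0 * D y + r0 * y)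
                   + D (arr D l0 r0 j) * y + arr D l0 r0 j * D y"
    using y by (simp add: derivation_add[OF D] derivation_mult[OF D])
  also have "\<dots> = ell D l0 r0 (Suc j) * D y + arr D l0 r0 (Suc j) * y"
    by (simp add: ell_Suc arr_Suc algebra_simps)
  finally show ?case .
qed

lemma solution_first_order_factor:
  assumes D: "derivation D" and y: "D (D y) = l0 * D y + r0 * y"
    and "ell D l0 r0 q \<noteq> 0"
    and arr_q: "arr D l0 r0 q = \<alpha> * ell D l0 r0 q"
    and arr_Suc_q: "arr D l0 r0 (Suc q) = \<alpha> * ell D l0 r0 (Suc q)"
  shows "D (D y + \<alpha> * y) = (\<alpha> + l0) * (D y + \<alpha> * y)"
proof -
  define L where "L = ell D l0 r0 q"
  define w where "w = D y + \<alpha> * y"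
  have "(D ^^ Suc (Suc q)) y = L * w"
    using higher_derivative_solution[OF D y, of q] arr_q
    by (simp add: L_def w_def algebra_simps)
  then have "(D ^^ Suc (Suc (Suc q))) y = D L * w + L * D w"
    by (simp add: derivation_mult[OF D])
  moreover have "(D ^^ Suc (Suc (Suc q))) y = (D L + \<alpha> * L + l0 * L) * w"
    using higher_derivative_solution[OF D y, of "Suc q"] arr_Suc_q
    by (simp add: ell_Suc arr_q L_def w_def algebra_simps)
  ultimately have "L * D w = L * ((\<alpha> + l0) * w)"
    by (simp add: algebra_simps)
  then show ?thesis
    using \<open>ell D l0 r0 q \<noteq> 0\<close> by (simp add: L_def w_def)
qed

lemma solution_from_first_order_factor:
  assumes D: "derivation D"
    and factor: "D (D y + \<alpha> * y) = (\<alpha> + l0) * (D y + \<alpha> * y)"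
    and "u \<noteq> 0" and "v \<noteq> 0"
    and "D u = \<alpha> * u" and "D v = l0 * v" and "D \<beta> = u ^ 2 * v"
  shows "\<exists>c1 c2. D c1 = 0 \<and> D c2 = 0 \<and> y = inverse u * (c2 + c1 * \<beta>)"
proof -
  define w where "w = D y + \<alpha> * y"
  define c1 where "c1 = w / (u * v)"
  have "D (u * v) = (\<alpha> + l0) * (u * v)"
    using \<open>D u = \<alpha> * u\<close> \<open>D v = l0 * v\<close> by (simp add: derivation_mult[OF D] algebra_simps)
  with factor have Dc1: "D c1 = 0"
    unfolding c1_def w_def
    by (rule derivation_quotient_eq_0[OF D]) (simp add: \<open>u \<noteq> 0\<close> \<open>v \<noteq> 0\<close>)
  have "D (u * y - c1 * \<beta>) = D (u * y) - c1 * D \<beta>"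
    using Dc1 by (simp add: derivation_diff[OF D] derivation_mult[OF D])
  also have "D (u * y) = u * w"
    using \<open>D u = \<alpha> * u\<close> by (simp add: derivation_mult[OF D] w_def algebra_simps)
  also have "c1 * D \<beta> = u * w"
    using \<open>D \<beta> = u ^ 2 * v\<close> \<open>u \<noteq> 0\<close> \<open>v \<noteq> 0\<close> by (simp add: c1_def power2_eq_square)
  finally have Dc2: "D (u * y - c1 * \<beta>) = 0" by simp
  have "y = inverse u * ((u * y - c1 * \<beta>) + c1 * \<beta>)"
    using \<open>u \<noteq> 0\<close> by simp
  with Dc1 Dc2 show ?thesis by blast
qed

theorem mainTheorem6:
  fixes D :: "'a::field_char_0 \<Rightarrow> 'a" and R :: "'a set"
    and l0 r0 \<alpha> u v \<beta> :: 'a and p :: nat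
  assumes "derivation D"
    and "differential_subfield D R"
    and "l0 \<in> R" and "r0 \<in> R"
    and "p > 0"
    and "ell D l0 r0 p \<noteq> 0" and "ell D l0 r0 (p - 1) \<noteq> 0"
    and "arr D l0 r0 p / ell D l0 r0 p = arr D l0 r0 (p - 1) / ell D l0 r0 (p - 1)"
    and "\<alpha> = arr D l0 r0 p / ell D l0 r0 p"
    and "u \<noteq> 0" and "v \<noteq> 0"
    and "D u = \<alpha> * u" and "D v = l0 * v" and "D \<beta> = u ^ 2 * v"
  shows "\<forall>y. D (D y) = l0 * D y + r0 * y \<longrightarrow>
           (\<exists>c1 c2. D c1 = 0 \<and> D c2 = 0 \<and> y = inverse u * (c2 + c1 * \<beta>))"
proof (intro allI impI)
  fix y assume y: "D (D y) = l0 * D y + r0 * y"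
  obtain q where p: "p = Suc q" using \<open>p > 0\<close> by (cases p) auto
  have ell_q: "ell D l0 r0 q \<noteq> 0" and ell_Suc_q: "ell D l0 r0 (Suc q) \<noteq> 0"
    using assms(6,7) p by simp_all
  have "\<alpha> = arr D l0 r0 q / ell D l0 r0 q"
    using assms(8,9) p by (metis diff_Suc_1)
  then have "arr D l0 r0 q = \<alpha> * ell D l0 r0 q"
    using ell_q by simp
  moreover have "arr D l0 r0 (Suc q) = \<alpha> * ell D l0 r0 (Suc q)"
    using assms(9) ell_Suc_q p by simp
  ultimately have "D (D y + \<alpha> * y) = (\<alpha> + l0) * (D y + \<alpha> * y)"
    by (rule solution_first_order_factor[OF \<open>derivation D\<close> y ell_q])
  then show "\<exists>c1 c2. D c1 = 0 \<and> D c2 = 0 \<and> y = inverse u * (c2 + c1 * \<beta>)"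
    using solution_from_first_order_factor[OF \<open>derivation D\<close>] assms(10-14) by blast
qed

end
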